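(* Let $R$ be a commutative ring with unit, $Q=(V,E,X,s,t,l)$ a labelled quiver, and let $f,g\in R\langle X\rangle$ be compatible with $Q$ such that $s(f)\cap t(g)\neq\emptyset$. Then $fg$ is compatible with $Q$ and \[\sigma(fg)\supseteq\{(u,w)\in s(g)\times t(f) \mid \exists v\in s(f)\cap t(g): (u,v)\in\sigma(g)\wedge (v,w)\in\sigma(f)\}.\] If in addition $f$ and $g$ are uniformly compatible with $Q$ and $fg\neq 0$, then equality holds and $fg$ is uniformly compatible as well.
   Context: $R\langle X\rangle$ is the free algebra of noncommutative polynomials over $R$ in indeterminates $X$, with monomials the words in $\langle X\rangle$ (including the empty word $1$); $\operatorname{supp}(f)$ is the set of monomials with nonzero coefficient. A labelled quiver $Q=(V,E,X,s,t,l)$ has vertices $V$, edges $E$, source/target maps $s,t:E\to V$ and labelling $l:E\to X$. A nonempty path $p=e_n\cdots e_1$ (with $s(e_{i+1})=t(e_i)$) has label $l(e_n)\cdots l(e_1)$, source $s(e_1)$, target $t(e_n)$; each vertex $v$ has an empty path with label $1$ and source and target $v$. For a monomial $m$, $\sigma(m)=\{(s(p),t(p)) : p \text{ a path with } l(p)=m\}$; for a polynomial $f$, $\sigma(f)=\bigcap_{m\in\operatorname{supp}(f)}\sigma(m)$. The sets of sources and targets of $f$ are $s(f)=\{v\in V\mid \exists w: (v,w)\in\sigma(f)\}$ and $t(f)=\{w\in V\mid\exists v:(v,w)\in\sigma(f)\}$. $f$ is compatible with $Q$ if $\sigma(f)\neq\emptyset$, and uniformly compatible if it is compatible and all $m\in\operatorname{supp}(f)$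 have the same set $\sigma(m)$. *)

theory Defs
  imports Main
begin

text \<open>Noncommutative polynomials over a commutative ring 'r in indeterminates 'x are
  represented as coefficient functions on words (monomials) 'x list with finite support.
  The word [x1,...,xn] stands for the monomial x1 x2 ... xn; [] is the empty word 1.\<close>

definition ncpoly :: "('x list \<Rightarrow> 'r::zero) \<Rightarrow> bool" where
  "ncpoly f \<longleftrightarrow> finite {m. f m \<noteq> 0}"

definition supp :: "('x list \<Rightarrow> 'r::zero) \<Rightarrow> 'x list set" where
  "supp f = {m. f m \<noteq> 0}"

definition ncmult :: "('x list \<Rightarrow> 'r::comm_ring_1) \<Rightarrow> ('x list \<Rightarrow> 'r) \<Rightarrow> 'x list \<Rightarrow> 'r" where
  "ncmult f g w = (\<Sum>i\<le>length w. f (take i w) * g (drop i w))"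

text \<open>Labelled quiver (V,E,X,s,t,l): vertex set V, edge set E, source/target maps into V,
  labelling into the alphabet 'x (the set X of indeterminates).\<close>
definition quiver :: "'v set \<Rightarrow> 'e set \<Rightarrow> ('e \<Rightarrow> 'v) \<Rightarrow> ('e \<Rightarrow> 'v) \<Rightarrow> bool" where
  "quiver V E s t \<longleftrightarrow> (\<forall>e\<in>E. s e \<in> V \<and> t e \<in> V)"

text \<open>A path p = e_n ... e_1 is written as the list [e_n, ..., e_1] with s(e_{i+1}) = t(e_i);
  its source is s(e_1), its target t(e_n), its label the word [l e_n, ..., l e_1].\<close>
fun path_from_to :: "'v set \<Rightarrow> 'e set \<Rightarrow> ('e \<Rightarrow> 'v) \<Rightarrow> ('e \<Rightarrow> 'v) \<Rightarrow> 'e list \<Rightarrow> 'v \<Rightarrow> 'v \<Rightarrow> bool" where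
  "path_from_to V E s t [] u w \<longleftrightarrow> u \<in> V \<and> u = w"
| "path_from_to V E s t (e # p) u w \<longleftrightarrow> e \<in> E \<and> t e = w \<and>
     (if p = [] then s e = u else path_from_to V E s t p u (s e))"

definition sigma_mono :: "'v set \<Rightarrow> 'e set \<Rightarrow> ('e \<Rightarrow> 'v) \<Rightarrow> ('e \<Rightarrow> 'v) \<Rightarrow> ('e \<Rightarrow> 'x)
    \<Rightarrow> 'x list \<Rightarrow> ('v \<times> 'v) set" where
  "sigma_mono V E s t l m = {(u, w). \<exists>p. path_from_to V E s t p u w \<and> map l p = m}"

text \<open>sigma(f): intersection over the support (restricted to V x V, which is the value of
  the empty intersection).\<close>
definition sigma :: "'v set \<Rightarrow> 'e set \<Rightarrow> ('e \<Rightarrow> 'v) \<Rightarrow> ('e \<Rightarrow> 'v) \<Rightarrow> ('e \<Rightarrow> 'x)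
    \<Rightarrow> ('x list \<Rightarrow> 'r::zero) \<Rightarrow> ('v \<times> 'v) set" where
  "sigma V E s t l f = {(u, w) \<in> V \<times> V. \<forall>m\<in>supp f. (u, w) \<in> sigma_mono V E s t l m}"

definition sources :: "'v set \<Rightarrow> 'e set \<Rightarrow> ('e \<Rightarrow> 'v) \<Rightarrow> ('e \<Rightarrow> 'v) \<Rightarrow> ('e \<Rightarrow> 'x)
    \<Rightarrow> ('x list \<Rightarrow> 'r::zero) \<Rightarrow> 'v set" where
  "sources V E s t l f = {v \<in> V. \<exists>w. (v, w) \<in> sigma V E s t l f}"

definition targets :: "'v set \<Rightarrow> 'e set \<Rightarrow> ('e \<Rightarrow> 'v) \<Rightarrow> ('e \<Rightarrow> 'v) \<Rightarrow> ('e \<Rightarrow> 'x)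
    \<Rightarrow> ('x list \<Rightarrow> 'r::zero) \<Rightarrow> 'v set" where
  "targets V E s t l f = {w \<in> V. \<exists>v. (v, w) \<in> sigma V E s t l f}"

definition compatible :: "'v set \<Rightarrow> 'e set \<Rightarrow> ('e \<Rightarrow> 'v) \<Rightarrow> ('e \<Rightarrow> 'v) \<Rightarrow> ('e \<Rightarrow> 'x)
    \<Rightarrow> ('x list \<Rightarrow> 'r::zero) \<Rightarrow> bool" where
  "compatible V E s t l f \<longleftrightarrow> sigma V E s t l f \<noteq> {}"

definition uniformly_compatible :: "'v set \<Rightarrow> 'e set \<Rightarrow> ('e \<Rightarrow> 'v) \<Rightarrow> ('e \<Rightarrow> 'v) \<Rightarrow> ('e \<Rightarrow> 'x)
    \<Rightarrow> ('x list \<Rightarrow> 'r::zero) \<Rightarrow> bool" where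
  "uniformly_compatible V E s t l f \<longleftrightarrow> compatible V E s t l f \<and>
     (\<forall>m\<in>supp f. \<forall>m'\<in>supp f. sigma_mono V E s t l m = sigma_mono V E s t l m')"

end

theory Submission
  imports Defs
begin

text \<open>Concatenating paths makes \<open>\<sigma>\<close> of a word the relational composite of the \<open>\<sigma>\<close>'s of its
  factors: \<open>\<sigma>(uv) = \<sigma>(v) O \<sigma>(u)\<close>. Every monomial of \<open>fg\<close> factors as \<open>uv\<close> with \<open>u\<close> in the
  support of \<open>f\<close> and \<open>v\<close> in that of \<open>g\<close>, so \<open>\<sigma>(g) O \<sigma>(f) \<subseteq> \<sigma>(fg)\<close>, and this composite is
  nonempty as soon as some source of \<open>f\<close> is a target of \<open>g\<close>. In the uniform case
  \<open>\<sigma>(u) = \<sigma>(f)\<close> and \<open>\<sigma>(v) = \<sigma>(g)\<close> for every such factorization, so every monomial of \<open>fg\<close>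
  has \<open>\<sigma> = \<sigma>(g) O \<sigma>(f)\<close>.\<close>

lemma path_from_to_in_V:
  assumes "quiver V E s t" and "path_from_to V E s t p u w"
  shows "u \<in> V \<and> w \<in> V"
  using assms(2)
proof (induction p arbitrary: w)
  case (Cons e p)
  then have "e \<in> E" "t e = w" by simp_all
  with assms(1) have "s e \<in> V" "w \<in> V" by (auto simp: quiver_def)
  moreover have "u \<in> V"
  proof (cases "p = []")
    case True
    with Cons.prems \<open>s e \<in> V\<close> show ?thesis by simp
  next
    case False
    with Cons.prems have "path_from_to V E s t p u (s e)" by simp
    then show ?thesis using Cons.IH by blast
  qed
  ultimately show ?case by simp
qed simp

lemma path_from_to_append:
  assumes "quiver V E s t"
  shows "path_from_to V E s t (p @ q) u w \<longleftrightarrow>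
    (\<exists>v. path_from_to V E s t p v w \<and> path_from_to V E s t q u v)"
proof (induction p arbitrary: w)
  case Nil
  show ?case using path_from_to_in_V[OF assms] by auto
next
  case (Cons e p)
  show ?case
  proof (cases "p = []")
    case True
    have "s e \<in> V" if "e \<in> E" using assms that by (simp add: quiver_def)
    with True show ?thesis by (cases q) auto
  next
    case False
    with Cons.IH show ?thesis by auto
  qed
qed

lemma sigma_mono_append:
  assumes "quiver V E s t"
  shows "sigma_mono V E s t l (m @ n) = sigma_mono V E s t l n O sigma_mono V E s t l m"
proof (intro set_eqI iffI)
  fix x assume "x \<in> sigma_mono V E s t l (m @ n)"
  then obtain u w p where x: "x = (u, w)" and p: "path_from_to V E s t p u w" "map l p = m @ n"
    by (auto simp: sigma_mono_def)
  from p(2) obtain p1 p2 where "p = p1 @ p2" "map l p1 = m" "map l p2 = n"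
    by (auto simp: map_eq_append_conv)
  with p(1) x show "x \<in> sigma_mono V E s t l n O sigma_mono V E s t l m"
    by (auto simp: sigma_mono_def path_from_to_append[OF assms])
next
  fix x assume "x \<in> sigma_mono V E s t l n O sigma_mono V E s t l m"
  then obtain u v w p q where "x = (u, w)" "path_from_to V E s t p v w" "map l p = m"
      "path_from_to V E s t q u v" "map l q = n"
    by (auto simp: sigma_mono_def)
  then show "x \<in> sigma_mono V E s t l (m @ n)"
    using path_from_to_append[OF assms, of p q u w] by (auto simp: sigma_mono_def)
qed

lemma sigma_mono_subset:
  assumes "quiver V E s t"
  shows "sigma_mono V E s t l m \<subseteq> V \<times> V"
  using path_from_to_in_V[OF assms] by (auto simp: sigma_mono_def)

lemma sigma_subset_sigma_mono:
  "m \<in> supp f \<Longrightarrow> sigma V E s t l f \<subseteq> sigma_mono V E s t l m"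
  by (auto simp: sigma_def)

lemma sigma_eq_if_sigma_mono_const:
  assumes "quiver V E s t" and "m \<in> supp f"
    and "\<And>m'. m' \<in> supp f \<Longrightarrow> sigma_mono V E s t l m' = R"
  shows "sigma V E s t l f = R"
proof -
  have "R \<subseteq> V \<times> V"
    using sigma_mono_subset[OF assms(1), of l m] assms(2,3) by simp
  with assms(2,3) show ?thesis by (auto simp: sigma_def)
qed

lemma supp_ncmult:
  assumes "m \<in> supp (ncmult f g)"
  obtains i where "take i m \<in> supp f" and "drop i m \<in> supp g"
proof -
  from assms obtain i where "f (take i m) * g (drop i m) \<noteq> 0"
    unfolding supp_def ncmult_def using sum.neutral by force
  then have "f (take i m) \<noteq> 0" and "g (drop i m) \<noteq> 0" by auto
  then show thesis using that by (simp add: supp_def)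
qed

lemma composable_pairs_eq_relcomp_sigma:
  "{(u, w) \<in> sources V E s t l g \<times> targets V E s t l f.
      \<exists>v \<in> sources V E s t l f \<inter> targets V E s t l g.
        (u, v) \<in> sigma V E s t l g \<and> (v, w) \<in> sigma V E s t l f}
    = sigma V E s t l g O sigma V E s t l f"
  by (auto simp: sources_def targets_def sigma_def)

lemma relcomp_sigma_nonempty:
  assumes "sources V E s t l f \<inter> targets V E s t l g \<noteq> {}"
  shows "sigma V E s t l g O sigma V E s t l f \<noteq> {}"
  using assms by (auto simp: sources_def targets_def)

lemma relcomp_sigma_subset_sigma_ncmult:
  assumes "quiver V E s t"
  shows "sigma V E s t l g O sigma V E s t l f \<subseteq> sigma V E s t l (ncmult f g)"
proof -
  have "sigma V E s t l g O sigma V E s t l f \<subseteq> sigma_mono V E s t l m"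
    if m: "m \<in> supp (ncmult f g)" for m
  proof -
    obtain i where "take i m \<in> supp f" "drop i m \<in> supp g"
      using supp_ncmult[OF m] .
    then have "sigma V E s t l g O sigma V E s t l f
        \<subseteq> sigma_mono V E s t l (drop i m) O sigma_mono V E s t l (take i m)"
      by (intro relcomp_mono sigma_subset_sigma_mono)
    also have "\<dots> = sigma_mono V E s t l m"
      using sigma_mono_append[OF assms, of l "take i m" "drop i m"] by simp
    finally show ?thesis .
  qed
  then show ?thesis by (auto simp: sigma_def)
qed

lemma sigma_eq_sigma_mono_if_uniformly_compatible:
  assumes "quiver V E s t" and "uniformly_compatible V E s t l f" and "m \<in> supp f"
  shows "sigma V E s t l f = sigma_mono V E s t l m"
proof (rule sigma_eq_if_sigma_mono_const[OF assms(1,3)])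
  fix m' assume "m' \<in> supp f"
  with assms(2,3) show "sigma_mono V E s t l m' = sigma_mono V E s t l m"
    unfolding uniformly_compatible_def by blast
qed

lemma sigma_mono_ncmult_if_uniformly_compatible:
  assumes "quiver V E s t"
    and "uniformly_compatible V E s t l f" and "uniformly_compatible V E s t l g"
    and "m \<in> supp (ncmult f g)"
  shows "sigma_mono V E s t l m = sigma V E s t l g O sigma V E s t l f"
proof -
  obtain i where "take i m \<in> supp f" "drop i m \<in> supp g"
    using supp_ncmult[OF assms(4)] .
  with assms(1-3) have "sigma V E s t l f = sigma_mono V E s t l (take i m)"
      and "sigma V E s t l g = sigma_mono V E s t l (drop i m)"
    by (simp_all add: sigma_eq_sigma_mono_if_uniformly_compatible)
  then show ?thesis
    using sigma_mono_append[OF assms(1), of l "take i m" "drop i m"] by simp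
qed

theorem lemma3p7:
  fixes V :: "'v set" and E :: "'e set" and s t :: "'e \<Rightarrow> 'v" and l :: "'e \<Rightarrow> 'x"
    and f g :: "'x list \<Rightarrow> 'r::comm_ring_1"
  assumes Q: "quiver V E s t"
    and pf: "ncpoly f" and pg: "ncpoly g"
    and cf: "compatible V E s t l f" and cg: "compatible V E s t l g"
    and st: "sources V E s t l f \<inter> targets V E s t l g \<noteq> {}"
  shows "compatible V E s t l (ncmult f g) \<and>
    {(u, w) \<in> sources V E s t l g \<times> targets V E s t l f.
       \<exists>v \<in> sources V E s t l f \<inter> targets V E s t l g.
         (u, v) \<in> sigma V E s t l g \<and> (v, w) \<in> sigma V E s t l f}
      \<subseteq> sigma V E s t l (ncmult f g) \<and>
    (uniformly_compatible V E s t l f \<and> uniformly_compatible V E s t l g \<and>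
     ncmult f g \<noteq> (\<lambda>_. 0) \<longrightarrow>
       sigma V E s t l (ncmult f g) =
         {(u, w) \<in> sources V E s t l g \<times> targets V E s t l f.
           \<exists>v \<in> sources V E s t l f \<inter> targets V E s t l g.
             (u, v) \<in> sigma V E s t l g \<and> (v, w) \<in> sigma V E s t l f}
       \<and> uniformly_compatible V E s t l (ncmult f g))"
proof -
  let ?R = "sigma V E s t l g O sigma V E s t l f"
  have sub: "?R \<subseteq> sigma V E s t l (ncmult f g)"
    using relcomp_sigma_subset_sigma_ncmult[OF Q] .
  moreover have comp: "compatible V E s t l (ncmult f g)"
    using sub relcomp_sigma_nonempty[OF st] unfolding compatible_def by blast
  moreover have "sigma V E s t l (ncmult f g) = ?R \<and> uniformly_compatible V E s t l (ncmult f g)"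
    if uf: "uniformly_compatible V E s t l f" and ug: "uniformly_compatible V E s t l g"
      and nz: "ncmult f g \<noteq> (\<lambda>_. 0)"
  proof -
    from nz obtain m where m: "m \<in> supp (ncmult f g)" by (auto simp: supp_def)
    have const: "sigma_mono V E s t l m' = ?R" if "m' \<in> supp (ncmult f g)" for m'
      using sigma_mono_ncmult_if_uniformly_compatible[OF Q uf ug that] .
    have "sigma V E s t l (ncmult f g) = ?R"
      using sigma_eq_if_sigma_mono_const[OF Q m const] .
    moreover have "uniformly_compatible V E s t l (ncmult f g)"
      using comp const unfolding uniformly_compatible_def by simp
    ultimately show ?thesis by simp
  qed
  ultimately show ?thesis unfolding composable_pairs_eq_relcomp_sigma by blast
qed

end
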